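(* There exist $C>0$ and $b_0>0$ such that for all $\theta>0$, all $\nu\in(0,1)$ and all $b>b_0$, $$\mathbb{E}[e^{-\theta\nu H}]\le\frac{C}{1+\frac{\nu}{b^2}e^{b^2/2}},$$ where $H:=\inf\{t\ge0: U(t)\notin(-\frac{b}{\sqrt{2\theta}},\frac{b}{\sqrt{2\theta}})\}$ and $U$ is the Ornstein–Uhlenbeck process $dU(t)=-\theta U(t)dt+dB(t)$, $U(0)=0$, with $B$ a standard Brownian motion. *)

theory Defs
  imports "HOL-Probability.Probability"
begin

definition std_brownian_motion :: "'a measure \<Rightarrow> (real \<Rightarrow> 'a \<Rightarrow> real) \<Rightarrow> bool" where
  "std_brownian_motion M B \<longleftrightarrow>
     prob_space M \<and>
     (\<forall>t\<ge>0. B t \<in> borel_measurable M) \<and>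
     (\<forall>\<omega>\<in>space M. B 0 \<omega> = 0) \<and>
     (\<forall>\<omega>\<in>space M. continuous_on {0..} (\<lambda>t. B t \<omega>)) \<and>
     (\<forall>s t. 0 \<le> s \<and> s < t \<longrightarrow>
        distributed M lborel (\<lambda>\<omega>. B t \<omega> - B s \<omega>) (normal_density 0 (sqrt (t - s)))) \<and>
     (\<forall>(ts :: nat \<Rightarrow> real) n. 0 \<le> ts 0 \<and> (\<forall>i<n. ts i < ts (Suc i)) \<longrightarrow>
        prob_space.indep_vars M (\<lambda>_. borel) (\<lambda>i \<omega>. B (ts (Suc i)) \<omega> - B (ts i) \<omega>) {..<n})"

text \<open>U is the Ornstein--Uhlenbeck process dU = -\<theta> U dt + dB, U(0) = 0, driven by B:
  pathwise (additive noise) this is the integral equation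
  U(t) = -\<theta> \<integral>_0^t U(s) ds + B(t), with continuous paths.\<close>
definition ou_process :: "'a measure \<Rightarrow> real \<Rightarrow> (real \<Rightarrow> 'a \<Rightarrow> real) \<Rightarrow> (real \<Rightarrow> 'a \<Rightarrow> real) \<Rightarrow> bool" where
  "ou_process M \<theta> B U \<longleftrightarrow>
     (\<forall>\<omega>\<in>space M. continuous_on {0..} (\<lambda>t. U t \<omega>) \<and>
        (\<forall>t\<ge>0. U t \<omega> = - \<theta> * integral {0..t} (\<lambda>s. U s \<omega>) + B t \<omega>))"

definition exit_time :: "real \<Rightarrow> (real \<Rightarrow> real) \<Rightarrow> ereal" where
  "exit_time a u = Inf {ereal t | t. t \<ge> 0 \<and> u t \<notin> {-a<..<a}}"

definition exp_neg :: "real \<Rightarrow> ereal \<Rightarrow> real" where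
  "exp_neg c h = (if h = \<infinity> then 0 else exp (- c * real_of_ereal h))"

end

theory Submission
  imports Defs
begin

text \<open>Variation of constants gives
  \<open>exp(\<theta>t) U(t) = exp(\<theta>t) B(t) - \<theta> \<integral>\<^sub>0\<^sup>t exp(\<theta>s) B(s) ds\<close>, the pathwise limit of the dyadic
  Riemann--Stieltjes sums \<open>\<Sum>\<^sub>l exp(\<theta>t\<^sub>l) (B(t\<^sub>l\<^sub>+\<^sub>1) - B(t\<^sub>l))\<close>. Their summands are independent
  centred Gaussians of total variance at most \<open>exp(2\<theta>T) / (2\<theta>)\<close>, so an exponential Kolmogorov
  maximal inequality bounds the probability that \<open>|exp(\<theta>t) U(t)|\<close> exceeds \<open>x\<close> for some
  \<open>t \<le> T\<close> by \<open>2 exp(-\<theta> x\<^sup>2 / exp(2\<theta>T))\<close>. With windows of length \<open>h = 1/(\<theta>b\<^sup>2)\<close>, the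
  probability that \<open>U\<close> leaves \<open>(-a, a)\<close>, \<open>a = b/\<surd>(2\<theta>)\<close>, during the \<open>k\<close>-th window is thus at
  most \<open>2 exp(2 - b\<^sup>2/2)\<close>, and summing \<open>exp(-\<theta>\<nu>kh)\<close> over the windows bounds
  \<open>E[exp(-\<theta>\<nu>H)]\<close> by \<open>2 exp(2 - b\<^sup>2/2) / (1 - exp(-\<nu>/b\<^sup>2))\<close>. Together with the trivial bound 1
  this gives the claim with \<open>C = 8 exp 2\<close> and \<open>b\<^sub>0 = 1\<close>.\<close>

section \<open>Pathwise analysis of the Ornstein--Uhlenbeck equation\<close>

lemma sum_lessThan_by_parts:
  fixes p q :: "nat \<Rightarrow> 'a :: comm_ring"
  shows "(\<Sum>l<n. p l * (q (Suc l) - q l)) = p n * q n - p 0 * q 0 - (\<Sum>l<n. q (Suc l) * (p (Suc l) - p l))"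
  by (induction n) (auto simp: algebra_simps)

lemma grid_sum_increment_error_le:
  fixes g :: "real \<Rightarrow> real \<Rightarrow> real" and L :: "real \<Rightarrow> real"
  assumes t: "t > 0" and n: "n > 0" and mesh: "t / real n < d"
    and err: "\<And>\<alpha> \<beta>. 0 \<le> \<alpha> \<Longrightarrow> \<alpha> < \<beta> \<Longrightarrow> \<beta> \<le> t \<Longrightarrow> \<beta> - \<alpha> < d \<Longrightarrow> \<bar>g \<alpha> \<beta> - (L \<beta> - L \<alpha>)\<bar> \<le> e * (\<beta> - \<alpha>)"
  shows "\<bar>(\<Sum>l<n. g (real l * t / real n) (real (Suc l) * t / real n)) - (L t - L 0)\<bar> \<le> e * t"
proof -
  define \<rho> where "\<rho> l = real l * t / real n" for l
  have \<rho>_Suc: "\<rho> (Suc l) - \<rho> l = t / real n" for l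
    unfolding \<rho>_def by (simp add: diff_divide_distrib[symmetric] algebra_simps)
  have increment: "\<bar>g (\<rho> l) (\<rho> (Suc l)) - (L (\<rho> (Suc l)) - L (\<rho> l))\<bar> \<le> e * (t / real n)"
    if "l < n" for l
  proof -
    have "real (Suc l) * t \<le> real n * t"
      using that t by (intro mult_right_mono) auto
    then have "0 \<le> \<rho> l" "\<rho> (Suc l) \<le> t"
      using t n unfolding \<rho>_def by (auto simp: divide_le_eq)
    moreover have "\<rho> l < \<rho> (Suc l)"
      using \<rho>_Suc[of l] t n by (simp add: algebra_simps)
    ultimately show ?thesis
      using err[of "\<rho> l" "\<rho> (Suc l)"] \<rho>_Suc[of l] mesh by simp
  qed
  have "(\<Sum>l<n. L (\<rho> (Suc l)) - L (\<rho> l)) = L t - L 0"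
    using sum_lessThan_telescope[of "\<lambda>l. L (\<rho> l)" n] n by (simp add: \<rho>_def)
  then have "\<bar>(\<Sum>l<n. g (\<rho> l) (\<rho> (Suc l))) - (L t - L 0)\<bar> = \<bar>\<Sum>l<n. g (\<rho> l) (\<rho> (Suc l)) - (L (\<rho> (Suc l)) - L (\<rho> l))\<bar>"
    by (simp add: sum_subtractf)
  also have "\<dots> \<le> (\<Sum>l<n. e * (t / real n))"
    by (intro order_trans[OF sum_abs sum_mono] increment) simp
  also have "\<dots> = e * t"
    using n by simp
  finally show ?thesis
    unfolding \<rho>_def .
qed

lemma grid_sum_tendsto_of_local_error:
  fixes g :: "real \<Rightarrow> real \<Rightarrow> real" and L :: "real \<Rightarrow> real"
  assumes t: "t > 0"
    and local_error: "\<And>e. e > 0 \<Longrightarrow> \<exists>d>0. \<forall>\<alpha> \<beta>. 0 \<le> \<alpha> \<longrightarrow> \<alpha> < \<beta> \<longrightarrow> \<beta> \<le> t \<longrightarrow> \<beta> - \<alpha> < d \<longrightarrow>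
                 \<bar>g \<alpha> \<beta> - (L \<beta> - L \<alpha>)\<bar> \<le> e * (\<beta> - \<alpha>)"
  shows "(\<lambda>n. \<Sum>l<n. g (real l * t / real n) (real (Suc l) * t / real n)) \<longlonglongrightarrow> L t - L 0"
  unfolding lim_sequentially
proof (intro allI impI)
  fix r :: real assume r: "r > 0"
  obtain d where d: "d > 0" and err: "\<And>\<alpha> \<beta>. 0 \<le> \<alpha> \<Longrightarrow> \<alpha> < \<beta> \<Longrightarrow> \<beta> \<le> t \<Longrightarrow> \<beta> - \<alpha> < d \<Longrightarrow>
      \<bar>g \<alpha> \<beta> - (L \<beta> - L \<alpha>)\<bar> \<le> r / (2 * t) * (\<beta> - \<alpha>)"
    using local_error[of "r / (2 * t)"] r t by auto
  obtain N :: nat where N: "t / d < real N"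
    using reals_Archimedean2 by blast
  have "dist (\<Sum>l<n. g (real l * t / real n) (real (Suc l) * t / real n)) (L t - L 0) < r"
    if "n \<ge> N" for n
  proof -
    have "t / d < real n"
      using N that by (meson less_le_trans of_nat_le_iff)
    moreover have "0 < t / d"
      using t d by simp
    ultimately have "real n > 0"
      by linarith
    then have "n > 0" "t / real n < d"
      using \<open>t / d < real n\<close> d by (auto simp: divide_less_eq mult.commute)
    then have "\<bar>(\<Sum>l<n. g (real l * t / real n) (real (Suc l) * t / real n)) - (L t - L 0)\<bar> \<le> r / (2 * t) * t"
      using t err by (intro grid_sum_increment_error_le)
    then show ?thesis
      using r t unfolding dist_real_def by simp
  qed
  then show "\<exists>N. \<forall>n\<ge>N. dist (\<Sum>l<n. g (real l * t / real n) (real (Suc l) * t / real n)) (L t - L 0) < r"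
    by blast
qed

lemma Stieltjes_increment_mean_value:
  fixes b c c' L :: "real \<Rightarrow> real"
  assumes c: "\<And>s. s \<in> {\<alpha>..\<beta>} \<Longrightarrow> (c has_real_derivative c' s) (at s)"
    and L: "continuous_on {\<alpha>..\<beta>} L" "\<And>s. s \<in> {\<alpha><..<\<beta>} \<Longrightarrow> (L has_real_derivative c' s * b s) (at s)"
    and \<alpha>\<beta>: "\<alpha> < \<beta>"
  obtains \<eta> \<xi> where "\<eta> \<in> {\<alpha><..<\<beta>}" "\<xi> \<in> {\<alpha><..<\<beta>}"
    "b \<beta> * (c \<beta> - c \<alpha>) - (L \<beta> - L \<alpha>) = (b \<beta> * (c' \<eta> - c' \<xi>) + c' \<xi> * (b \<beta> - b \<xi>)) * (\<beta> - \<alpha>)"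
proof -
  obtain \<eta> where \<eta>: "\<alpha> < \<eta>" "\<eta> < \<beta>" "c \<beta> - c \<alpha> = (\<beta> - \<alpha>) * c' \<eta>"
    using MVT2[OF \<alpha>\<beta>, of c c'] c by auto
  have "(L has_derivative (*) (c' s * b s)) (at s)" if "\<alpha> < s" "s < \<beta>" for s
    using L(2)[of s] that by (simp add: has_field_derivative_def)
  then obtain \<xi> where \<xi>: "\<alpha> < \<xi>" "\<xi> < \<beta>" "L \<beta> - L \<alpha> = c' \<xi> * b \<xi> * (\<beta> - \<alpha>)"
    by (rule mvt[OF \<alpha>\<beta> L(1)])
  have "b \<beta> * (c \<beta> - c \<alpha>) - (L \<beta> - L \<alpha>) = (b \<beta> * (c' \<eta> - c' \<xi>) + c' \<xi> * (b \<beta> - b \<xi>)) * (\<beta> - \<alpha>)"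
    unfolding \<eta>(3) \<xi>(3) by (simp add: algebra_simps)
  then show thesis
    using that \<eta> \<xi> by auto
qed

lemma Stieltjes_increment_local_error:
  fixes b c c' L :: "real \<Rightarrow> real"
  assumes b: "continuous_on {0..t} b" and c': "continuous_on {0..t} c'"
    and c: "\<And>s. s \<in> {0..t} \<Longrightarrow> (c has_real_derivative c' s) (at s)"
    and L: "continuous_on {0..t} L" "\<And>s. s \<in> {0<..<t} \<Longrightarrow> (L has_real_derivative c' s * b s) (at s)"
    and e: "e > 0"
  shows "\<exists>d>0. \<forall>\<alpha> \<beta>. 0 \<le> \<alpha> \<longrightarrow> \<alpha> < \<beta> \<longrightarrow> \<beta> \<le> t \<longrightarrow> \<beta> - \<alpha> < d \<longrightarrow>
           \<bar>b \<beta> * (c \<beta> - c \<alpha>) - (L \<beta> - L \<alpha>)\<bar> \<le> e * (\<beta> - \<alpha>)"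
proof -
  obtain Bb where Bb: "Bb > 0" "\<forall>s\<in>{0..t}. \<bar>b s\<bar> \<le> Bb"
    using compact_imp_bounded[OF compact_continuous_image[OF b compact_Icc]] by (auto simp: bounded_pos)
  obtain Bc where Bc: "Bc > 0" "\<forall>s\<in>{0..t}. \<bar>c' s\<bar> \<le> Bc"
    using compact_imp_bounded[OF compact_continuous_image[OF c' compact_Icc]] by (auto simp: bounded_pos)
  define e' where "e' = e / (Bb + Bc)"
  have "Bb + Bc > 0"
    using Bb(1) Bc(1) by simp
  then have e': "e' > 0" "Bb * e' + Bc * e' = e"
    using e unfolding e'_def by (simp_all add: add_divide_distrib[symmetric] distrib_right[symmetric])
  obtain d1 where d1: "d1 > 0" "\<And>x x'. x \<in> {0..t} \<Longrightarrow> x' \<in> {0..t} \<Longrightarrow> dist x' x < d1 \<Longrightarrow> dist (b x') (b x) < e'"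
    using compact_uniformly_continuous[OF b compact_Icc] e' unfolding uniformly_continuous_on_def by metis
  obtain d2 where d2: "d2 > 0" "\<And>x x'. x \<in> {0..t} \<Longrightarrow> x' \<in> {0..t} \<Longrightarrow> dist x' x < d2 \<Longrightarrow> dist (c' x') (c' x) < e'"
    using compact_uniformly_continuous[OF c' compact_Icc] e' unfolding uniformly_continuous_on_def by metis
  have "\<bar>b \<beta> * (c \<beta> - c \<alpha>) - (L \<beta> - L \<alpha>)\<bar> \<le> e * (\<beta> - \<alpha>)"
    if \<alpha>\<beta>: "0 \<le> \<alpha>" "\<alpha> < \<beta>" "\<beta> \<le> t" "\<beta> - \<alpha> < min d1 d2" for \<alpha> \<beta>
  proof -
    have "(c has_real_derivative c' s) (at s)" if "s \<in> {\<alpha>..\<beta>}" for s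
      using c that \<alpha>\<beta> by auto
    moreover have "continuous_on {\<alpha>..\<beta>} L"
      using L(1) by (rule continuous_on_subset) (use \<alpha>\<beta> in auto)
    moreover have "(L has_real_derivative c' s * b s) (at s)" if "s \<in> {\<alpha><..<\<beta>}" for s
      using L(2) that \<alpha>\<beta> by auto
    ultimately obtain \<eta> \<xi> where \<eta>\<xi>: "\<eta> \<in> {\<alpha><..<\<beta>}" "\<xi> \<in> {\<alpha><..<\<beta>}"
      and eq: "b \<beta> * (c \<beta> - c \<alpha>) - (L \<beta> - L \<alpha>) = (b \<beta> * (c' \<eta> - c' \<xi>) + c' \<xi> * (b \<beta> - b \<xi>)) * (\<beta> - \<alpha>)"
      using \<alpha>\<beta>(2) by (rule Stieltjes_increment_mean_value) blast
    have in_range: "\<eta> \<in> {0..t}" "\<xi> \<in> {0..t}" "\<beta> \<in> {0..t}"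
      using \<alpha>\<beta> \<eta>\<xi> by auto
    have "\<bar>c' \<eta> - c' \<xi>\<bar> < e'" "\<bar>b \<beta> - b \<xi>\<bar> < e'"
      using d1(2)[of \<xi> \<beta>] d2(2)[of \<xi> \<eta>] in_range \<alpha>\<beta> \<eta>\<xi> by (auto simp: dist_real_def)
    then have "\<bar>b \<beta> * (c' \<eta> - c' \<xi>) + c' \<xi> * (b \<beta> - b \<xi>)\<bar> \<le> Bb * e' + Bc * e'"
      using Bb Bc in_range
      by (intro order_trans[OF abs_triangle_ineq add_mono]) (auto simp: abs_mult intro!: mult_mono)
    then have "\<bar>b \<beta> * (c' \<eta> - c' \<xi>) + c' \<xi> * (b \<beta> - b \<xi>)\<bar> * (\<beta> - \<alpha>) \<le> e * (\<beta> - \<alpha>)"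
      unfolding e'(2) using \<alpha>\<beta> by (intro mult_right_mono) auto
    moreover have "\<bar>\<beta> - \<alpha>\<bar> = \<beta> - \<alpha>"
      using \<alpha>\<beta> by simp
    ultimately show ?thesis
      unfolding eq abs_mult by simp
  qed
  then show ?thesis
    using d1(1) d2(1) by (intro exI[of _ "min d1 d2"]) auto
qed

lemma grid_Stieltjes_sum_tendsto:
  fixes b c c' :: "real \<Rightarrow> real"
  assumes b: "continuous_on {0..t} b" and c': "continuous_on {0..t} c'"
    and c: "\<And>s. s \<in> {0..t} \<Longrightarrow> (c has_real_derivative c' s) (at s)" and t: "t > 0"
  shows "(\<lambda>n. \<Sum>l<n. b (real (Suc l) * t / real n) * (c (real (Suc l) * t / real n) - c (real l * t / real n)))
          \<longlonglongrightarrow> integral {0..t} (\<lambda>s. c' s * b s)"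
proof -
  define L where "L s = integral {0..s} (\<lambda>s. c' s * b s)" for s
  have cb: "continuous_on {0..t} (\<lambda>s. c' s * b s)"
    using b c' by (intro continuous_intros)
  have "continuous_on {0..t} L"
    unfolding L_def by (intro indefinite_integral_continuous_1 integrable_continuous_real cb)
  moreover have "(L has_real_derivative c' s * b s) (at s)" if "s \<in> {0<..<t}" for s
    using integral_has_real_derivative[OF cb, of s] that
    unfolding L_def by (simp add: at_within_Icc_at)
  ultimately have "(\<lambda>n. \<Sum>l<n. b (real (Suc l) * t / real n) * (c (real (Suc l) * t / real n) - c (real l * t / real n)))
          \<longlonglongrightarrow> L t - L 0"
    by (intro grid_sum_tendsto_of_local_error[OF t] Stieltjes_increment_local_error[OF b c' c])
  then show ?thesis
    by (simp add: L_def)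
qed

lemma ou_path_variation_of_constants:
  fixes u b :: "real \<Rightarrow> real"
  assumes u: "continuous_on {0..} u" and eq: "\<And>s. s \<ge> 0 \<Longrightarrow> u s = - \<theta> * integral {0..s} u + b s"
    and t: "t \<ge> 0"
  shows "exp (\<theta> * t) * u t = exp (\<theta> * t) * b t - \<theta> * integral {0..t} (\<lambda>s. exp (\<theta> * s) * b s)"
proof -
  define F where "F s = integral {0..s} u" for s
  define K where "K s = exp (\<theta> * s) * F s" for s
  have F_deriv: "(F has_real_derivative u s) (at s)" if "s > 0" for s
  proof -
    have "continuous_on {0..s + 1} u"
      using u by (rule continuous_on_subset) auto
    from integral_has_real_derivative[OF this, of s] that show ?thesis
      unfolding F_def by (simp add: at_within_Icc_at)
  qed
  have K_deriv: "(K has_real_derivative exp (\<theta> * s) * b s) (at s)" if "s > 0" for s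
  proof -
    have "(K has_real_derivative exp (\<theta> * s) * (\<theta> * F s + u s)) (at s)"
      unfolding K_def using that
      by (auto intro!: derivative_eq_intros F_deriv simp: algebra_simps)
    then show ?thesis
      using eq[of s] that by (simp add: F_def)
  qed
  have "continuous_on {0..t} u"
    using u by (rule continuous_on_subset) auto
  then have "continuous_on {0..t} K"
    unfolding K_def F_def by (intro continuous_intros indefinite_integral_continuous_1 integrable_continuous_real)
  then have "((\<lambda>s. exp (\<theta> * s) * b s) has_integral K t - K 0) {0..t}"
    using t K_deriv by (intro fundamental_theorem_of_calculus_interior)
      (auto simp: has_real_derivative_iff_has_vector_derivative[symmetric])
  then have "integral {0..t} (\<lambda>s. exp (\<theta> * s) * b s) = K t"
    by (simp add: integral_unique K_def F_def)
  moreover have "b t = u t + \<theta> * F t"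
    using eq[OF t] unfolding F_def by simp
  ultimately show ?thesis
    by (simp add: K_def algebra_simps)
qed

definition exp_grid_sum :: "real \<Rightarrow> (real \<Rightarrow> real) \<Rightarrow> real \<Rightarrow> nat \<Rightarrow> nat \<Rightarrow> real" where
  "exp_grid_sum \<theta> b t n i =
     (\<Sum>l<i. exp (\<theta> * (real l * t / real n)) * (b (real (Suc l) * t / real n) - b (real l * t / real n)))"

lemma exp_grid_sum_mesh_cong:
  assumes "t / real n = t' / real n'"
  shows "exp_grid_sum \<theta> b t n i = exp_grid_sum \<theta> b t' n' i"
proof -
  have grid: "real l * t / real n = real l * t' / real n'" for l
    using assms by (metis times_divide_eq_right)
  show ?thesis
    unfolding exp_grid_sum_def grid ..
qed

lemma ou_path_exp_grid_sum_tendsto: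
  fixes u b :: "real \<Rightarrow> real"
  assumes u: "continuous_on {0..} u" and b: "continuous_on {0..} b" and b0: "b 0 = 0"
    and eq: "\<And>s. s \<ge> 0 \<Longrightarrow> u s = - \<theta> * integral {0..s} u + b s" and t: "t > 0"
  shows "(\<lambda>n. exp_grid_sum \<theta> b t n n) \<longlonglongrightarrow> exp (\<theta> * t) * u t"
proof -
  define c where "c s = exp (\<theta> * s)" for s
  define R where "R n = (\<Sum>l<n. b (real (Suc l) * t / real n) * (c (real (Suc l) * t / real n) - c (real l * t / real n)))" for n
  have b_t: "continuous_on {0..t} b"
    using b by (rule continuous_on_subset) auto
  have "R \<longlonglongrightarrow> integral {0..t} (\<lambda>s. \<theta> * c s * b s)"
    unfolding R_def c_def using b_t t
    by (intro grid_Stieltjes_sum_tendsto) (auto intro!: continuous_intros derivative_eq_intros)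
  then have "(\<lambda>n. c t * b t - R n) \<longlonglongrightarrow> exp (\<theta> * t) * u t"
    using ou_path_variation_of_constants[OF u eq, of t] t
    by (auto intro!: tendsto_eq_intros simp: c_def mult.assoc)
  moreover have "\<forall>\<^sub>F n in sequentially. c t * b t - R n
      = (\<Sum>l<n. c (real l * t / real n) * (b (real (Suc l) * t / real n) - b (real l * t / real n)))"
  proof (rule eventually_sequentiallyI[of 1])
    fix n :: nat assume "n \<ge> 1"
    then show "c t * b t - R n
      = (\<Sum>l<n. c (real l * t / real n) * (b (real (Suc l) * t / real n) - b (real l * t / real n)))"
      using sum_lessThan_by_parts[of "\<lambda>l. c (real l * t / real n)" "\<lambda>l. b (real l * t / real n)" n] b0
      by (simp add: R_def)
  qed
  ultimately have "(\<lambda>n. \<Sum>l<n. c (real l * t / real n) * (b (real (Suc l) * t / real n) - b (real l * t / real n)))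
      \<longlonglongrightarrow> exp (\<theta> * t) * u t"
    by (rule Lim_transform_eventually)
  then show ?thesis
    by (simp add: c_def exp_grid_sum_def)
qed

lemma dyadic_grid_point_below:
  fixes T t d :: real
  assumes T: "T > 0" and d: "d > 0" and t: "0 \<le> t" "t \<le> T"
  obtains N j :: nat where "j \<le> 2 ^ N" "real j * T / 2 ^ N \<le> t" "t - real j * T / 2 ^ N < d"
proof -
  obtain N :: nat where N: "T / d < 2 ^ N"
    using real_arch_pow[of 2 "T / d"] by auto
  define j where "j = nat \<lfloor>t * 2 ^ N / T\<rfloor>"
  have "real j = of_int \<lfloor>t * 2 ^ N / T\<rfloor>"
    using t T unfolding j_def by simp
  then have j: "real j \<le> t * 2 ^ N / T" "t * 2 ^ N / T < real j + 1"
    by linarith+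
  have "t * 2 ^ N \<le> T * 2 ^ N"
    using t by (intro mult_right_mono) auto
  then have "t * 2 ^ N / T \<le> 2 ^ N"
    using T by (simp add: pos_divide_le_eq algebra_simps)
  then have "real j \<le> 2 ^ N"
    using j(1) by linarith
  then have "j \<le> 2 ^ N"
    by (metis of_nat_le_iff of_nat_numeral of_nat_power)
  moreover have "real j * T / 2 ^ N \<le> t"
    using j(1) T by (simp add: field_simps)
  moreover have "t - real j * T / 2 ^ N < T / 2 ^ N"
  proof -
    have "t * 2 ^ N < (real j + 1) * T"
      using j(2) T by (simp add: pos_divide_less_eq)
    then have "t < (real j + 1) * T / 2 ^ N"
      by (simp add: pos_less_divide_eq)
    then show ?thesis
      by (simp add: distrib_right add_divide_distrib)
  qed
  moreover have "T / 2 ^ N < d"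
    using N d by (simp add: field_simps)
  ultimately show ?thesis
    using that by force
qed

lemma exists_dyadic_point_gt:
  fixes w :: "real \<Rightarrow> real"
  assumes w: "continuous_on {0..T} w" "w 0 = 0" and T: "T > 0" and x: "x \<ge> 0"
    and t: "0 \<le> t" "t \<le> T" and gt: "x < \<bar>w t\<bar>"
  obtains N j :: nat where "0 < j" "j \<le> 2 ^ N" "x < \<bar>w (real j * T / 2 ^ N)\<bar>"
proof -
  obtain d where d: "d > 0" and close: "\<forall>s\<in>{0..T}. dist s t < d \<longrightarrow> dist (w s) (w t) < \<bar>w t\<bar> - x"
    using continuous_on_iff[THEN iffD1, rule_format, OF w(1), of t "\<bar>w t\<bar> - x"] t gt by auto
  have near: "x < \<bar>w s\<bar>" if "s \<in> {0..T}" "\<bar>t - s\<bar> < d" for s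
    using close that abs_triangle_ineq3[of "w t" "w s"]
    by (auto simp: dist_real_def abs_minus_commute)
  obtain N j where j: "j \<le> 2 ^ N" "real j * T / 2 ^ N \<le> t" "t - real j * T / 2 ^ N < d"
    using dyadic_grid_point_below[OF T d t] .
  then have gt_j: "x < \<bar>w (real j * T / 2 ^ N)\<bar>"
    using t T by (intro near) auto
  have "j \<noteq> 0"
  proof
    assume "j = 0"
    then show False
      using gt_j w(2) x by simp
  qed
  then show ?thesis
    using j(1) gt_j by (intro that) auto
qed

lemma ou_path_eventually_exp_grid_sum_gt:
  fixes u b :: "real \<Rightarrow> real"
  assumes u: "continuous_on {0..} u" and b: "continuous_on {0..} b" and b0: "b 0 = 0"
    and eq: "\<And>s. s \<ge> 0 \<Longrightarrow> u s = - \<theta> * integral {0..s} u + b s"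
    and T: "T > 0" and x: "x \<ge> 0" and t: "0 \<le> t" "t \<le> T" and gt: "x < \<bar>exp (\<theta> * t) * u t\<bar>"
  shows "\<forall>\<^sub>F N in sequentially. \<exists>i\<le>2 ^ N. x < \<bar>exp_grid_sum \<theta> b T (2 ^ N) i\<bar>"
proof -
  have "continuous_on {0..T} (\<lambda>s. exp (\<theta> * s) * u s)"
    by (intro continuous_intros continuous_on_subset[OF u]) auto
  moreover have "exp (\<theta> * 0) * u 0 = 0"
    using eq[of 0] b0 by simp
  ultimately obtain N0 j where j: "0 < j" "j \<le> 2 ^ N0"
    and "x < \<bar>exp (\<theta> * (real j * T / 2 ^ N0)) * u (real j * T / 2 ^ N0)\<bar>"
    by (rule exists_dyadic_point_gt[where w="\<lambda>s. exp (\<theta> * s) * u s", OF _ _ T x t gt])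
  define t' where "t' = real j * T / 2 ^ N0"
  have gt': "x < \<bar>exp (\<theta> * t') * u t'\<bar>"
    unfolding t'_def by fact
  define R where "R n = exp_grid_sum \<theta> b t' n n" for n
  have "t' > 0"
    unfolding t'_def using T j(1) by (intro divide_pos_pos mult_pos_pos) auto
  have "R \<longlonglongrightarrow> exp (\<theta> * t') * u t'"
    unfolding R_def by (rule ou_path_exp_grid_sum_tendsto[OF u b b0 eq \<open>t' > 0\<close>])
  moreover have "strict_mono (\<lambda>m. j * 2 ^ m)"
    using j(1) unfolding strict_mono_Suc_iff by simp
  ultimately have "(\<lambda>m. \<bar>R (j * 2 ^ m)\<bar>) \<longlonglongrightarrow> \<bar>exp (\<theta> * t') * u t'\<bar>"
    using LIMSEQ_subseq_LIMSEQ unfolding comp_def by (blast intro: tendsto_rabs)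
  then have "\<forall>\<^sub>F m in sequentially. x < \<bar>R (j * 2 ^ m)\<bar>"
    using gt' by (rule order_tendstoD(1))
  then obtain m0 where m0: "\<And>m. m \<ge> m0 \<Longrightarrow> x < \<bar>R (j * 2 ^ m)\<bar>"
    unfolding eventually_sequentially by blast
  have "\<exists>i\<le>2 ^ N. x < \<bar>exp_grid_sum \<theta> b T (2 ^ N) i\<bar>" if "N \<ge> N0 + m0" for N
  proof -
    define m where "m = N - N0"
    have N: "N = N0 + m" "m \<ge> m0"
      using that unfolding m_def by auto
    have "j * 2 ^ m \<le> 2 ^ N"
      unfolding N power_add using j(2) by simp
    moreover have "t' / real (j * 2 ^ m) = T / real (2 ^ N)"
      using j(1) unfolding t'_def N by (simp add: power_add field_simps)
    then have "R (j * 2 ^ m) = exp_grid_sum \<theta> b T (2 ^ N) (j * 2 ^ m)"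
      unfolding R_def by (rule exp_grid_sum_mesh_cong)
    ultimately show ?thesis
      using m0[OF N(2)] by auto
  qed
  then show ?thesis
    unfolding eventually_sequentially by blast
qed

section \<open>An exponential maximal inequality for Gaussian partial sums\<close>

lemma nn_integral_exp_mult_centred_normal:
  assumes Y: "distributed M lborel Y (\<lambda>x. ennreal (normal_density 0 \<sigma> x))" and \<sigma>: "\<sigma> > 0"
  shows "(\<integral>\<^sup>+\<omega>. ennreal (exp (\<mu> * Y \<omega>)) \<partial>M) = ennreal (exp (\<mu>\<^sup>2 * \<sigma>\<^sup>2 / 2))"
proof -
  have tilt: "normal_density 0 \<sigma> x * exp (\<mu> * x) = exp (\<mu>\<^sup>2 * \<sigma>\<^sup>2 / 2) * normal_density (\<mu> * \<sigma>\<^sup>2) \<sigma> x"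
    for x :: real
  proof -
    have "exp (- (x - 0)\<^sup>2 / (2 * \<sigma>\<^sup>2)) * exp (\<mu> * x)
        = exp (\<mu>\<^sup>2 * \<sigma>\<^sup>2 / 2) * exp (- (x - \<mu> * \<sigma>\<^sup>2)\<^sup>2 / (2 * \<sigma>\<^sup>2))"
      unfolding exp_add[symmetric] using \<sigma>
      by (intro arg_cong[where f=exp]) (simp add: field_simps power2_eq_square)
    then show ?thesis
      unfolding normal_density_def by (simp add: algebra_simps)
  qed
  have "(\<integral>\<^sup>+\<omega>. ennreal (exp (\<mu> * Y \<omega>)) \<partial>M)
      = (\<integral>\<^sup>+x. ennreal (normal_density 0 \<sigma> x) * ennreal (exp (\<mu> * x)) \<partial>lborel)"
    using distributed_nn_integral[OF Y, of "\<lambda>x. ennreal (exp (\<mu> * x))"] by simp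
  also have "\<dots> = (\<integral>\<^sup>+x. ennreal (exp (\<mu>\<^sup>2 * \<sigma>\<^sup>2 / 2)) * ennreal (normal_density (\<mu> * \<sigma>\<^sup>2) \<sigma> x) \<partial>lborel)"
    by (intro nn_integral_cong) (simp add: tilt flip: ennreal_mult)
  also have "\<dots> = ennreal (exp (\<mu>\<^sup>2 * \<sigma>\<^sup>2 / 2))"
    using \<sigma> by (simp add: nn_integral_cmult nn_integral_eq_integral)
  finally show ?thesis .
qed

lemma (in prob_space) indep_var_nn_integral_mult:
  fixes F G :: "'a \<Rightarrow> ennreal"
  assumes "indep_var borel F borel G"
  shows "(\<integral>\<^sup>+\<omega>. F \<omega> * G \<omega> \<partial>M) = (\<integral>\<^sup>+\<omega>. F \<omega> \<partial>M) * (\<integral>\<^sup>+\<omega>. G \<omega> \<partial>M)"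
proof -
  have borel_bool: "(\<lambda>_ :: bool. borel) = case_bool borel borel"
    by (rule ext) (simp split: bool.split)
  have "indep_vars (\<lambda>_. borel) (case_bool F G) UNIV"
    using assms unfolding indep_var_def by (simp only: borel_bool)
  then have "(\<integral>\<^sup>+\<omega>. (\<Prod>i\<in>UNIV. case_bool F G i \<omega>) \<partial>M) = (\<Prod>i\<in>UNIV. \<integral>\<^sup>+\<omega>. case_bool F G i \<omega> \<partial>M)"
    by (intro indep_vars_nn_integral) auto
  then show ?thesis
    by (simp add: UNIV_bool mult.commute)
qed

lemma (in prob_space) nn_integral_mult_indep_blocks:
  fixes X :: "'i \<Rightarrow> 'a \<Rightarrow> real" and F G :: "('i \<Rightarrow> real) \<Rightarrow> ennreal"
  assumes ind: "indep_vars (\<lambda>_. borel) X I" and AB: "A \<inter> B = {}" "A \<subseteq> I" "B \<subseteq> I"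
    and F: "F \<in> borel_measurable (PiM A (\<lambda>_. borel))" and G: "G \<in> borel_measurable (PiM B (\<lambda>_. borel))"
  shows "(\<integral>\<^sup>+\<omega>. F (restrict (\<lambda>i. X i \<omega>) A) * G (restrict (\<lambda>i. X i \<omega>) B) \<partial>M)
      = (\<integral>\<^sup>+\<omega>. F (restrict (\<lambda>i. X i \<omega>) A) \<partial>M) * (\<integral>\<^sup>+\<omega>. G (restrict (\<lambda>i. X i \<omega>) B) \<partial>M)"
  using indep_var_compose[OF indep_var_restrict[OF ind AB] F G] unfolding comp_def
  by (rule indep_var_nn_integral_mult)

lemma sets_exists_partial_sum_gt:
  fixes X :: "nat \<Rightarrow> 'a \<Rightarrow> real"
  assumes "\<And>l. l < n \<Longrightarrow> X l \<in> borel_measurable M"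
  shows "{\<omega>\<in>space M. \<exists>i\<le>n. x < (\<Sum>l<i. X l \<omega>)} \<in> sets M"
proof -
  have "{\<omega>\<in>space M. \<exists>i\<le>n. x < (\<Sum>l<i. X l \<omega>)} = (\<Union>i\<in>{..n}. {\<omega>\<in>space M. x < (\<Sum>l<i. X l \<omega>)})"
    by auto
  also have "\<dots> \<in> sets M"
    using assms by (intro sets.finite_UN) (auto intro!: borel_measurable_less borel_measurable_sum)
  finally show ?thesis .
qed

lemma sets_first_passage:
  fixes X :: "nat \<Rightarrow> 'a \<Rightarrow> real"
  assumes X: "\<And>l. l < j \<Longrightarrow> X l \<in> borel_measurable M"
  shows "{\<omega>\<in>space M. x < (\<Sum>l<j. X l \<omega>) \<and> (\<forall>i<j. (\<Sum>l<i. X l \<omega>) \<le> x)} \<in> sets M"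
proof (intro sets.sets_Collect_conj sets.sets_Collect_countable_All)
  have S: "(\<lambda>\<omega>. \<Sum>l<i. X l \<omega>) \<in> borel_measurable M" if "i \<le> j" for i
    using that by (auto intro!: borel_measurable_sum X)
  show "{\<omega>\<in>space M. x < (\<Sum>l<j. X l \<omega>)} \<in> sets M"
    using S[of j] by (intro borel_measurable_less) auto
  show "{\<omega>\<in>space M. i < j \<longrightarrow> (\<Sum>l<i. X l \<omega>) \<le> x} \<in> sets M" for i
    using S[of i] by (cases "i < j") (auto intro!: borel_measurable_le)
qed

lemma (in prob_space) nn_integral_exp_sum_indep:
  assumes ind: "indep_vars (\<lambda>_. borel) X I" and K: "finite K" "K \<subseteq> I"
    and mgf: "\<And>l \<mu>. l \<in> I \<Longrightarrow> (\<integral>\<^sup>+\<omega>. ennreal (exp (\<mu> * X l \<omega>)) \<partial>M) = ennreal (exp (\<mu>\<^sup>2 * v l / 2))"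
  shows "(\<integral>\<^sup>+\<omega>. ennreal (exp (s * (\<Sum>l\<in>K. X l \<omega>))) \<partial>M) = ennreal (exp (s\<^sup>2 * (\<Sum>l\<in>K. v l) / 2))"
proof -
  have ind_exp: "indep_vars (\<lambda>_. borel) (\<lambda>l \<omega>. ennreal (exp (s * X l \<omega>))) K"
    by (rule indep_vars_compose2[OF indep_vars_subset[OF ind K(2)]]) auto
  have "(\<integral>\<^sup>+\<omega>. ennreal (exp (s * (\<Sum>l\<in>K. X l \<omega>))) \<partial>M)
      = (\<integral>\<^sup>+\<omega>. (\<Prod>l\<in>K. ennreal (exp (s * X l \<omega>))) \<partial>M)"
    using K(1) by (simp add: sum_distrib_left exp_sum prod_ennreal)
  also have "\<dots> = (\<Prod>l\<in>K. ennreal (exp (s\<^sup>2 * v l / 2)))"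
    using K mgf by (subst indep_vars_nn_integral[OF K(1) ind_exp]) (auto intro!: prod.cong)
  also have "\<dots> = ennreal (exp (s\<^sup>2 * (\<Sum>l\<in>K. v l) / 2))"
    using K(1) by (simp add: prod_ennreal exp_sum sum_distrib_left sum_divide_distrib)
  finally show ?thesis .
qed

text \<open>The exponential-martingale step of the maximal inequality, localised to the event that the
  partial sums first exceed \<open>x\<close> at step \<open>j\<close>: the increments after \<open>j\<close> are independent of
  that event and have exponential moment at least 1.\<close>

lemma (in prob_space) exp_mult_emeasure_first_passage_le:
  fixes X :: "nat \<Rightarrow> 'a \<Rightarrow> real" and x :: real
  assumes ind: "indep_vars (\<lambda>_. borel) X {..<n}"
    and mgf: "\<And>l \<mu>. l < n \<Longrightarrow> (\<integral>\<^sup>+\<omega>. ennreal (exp (\<mu> * X l \<omega>)) \<partial>M) = ennreal (exp (\<mu>\<^sup>2 * v l / 2))"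
    and v: "\<And>l. l < n \<Longrightarrow> v l \<ge> 0" and j: "j \<le> n" and s: "s \<ge> 0"
  defines "A \<equiv> {\<omega>\<in>space M. x < (\<Sum>l<j. X l \<omega>) \<and> (\<forall>i<j. (\<Sum>l<i. X l \<omega>) \<le> x)}"
  shows "ennreal (exp (s * x)) * emeasure M A
      \<le> (\<integral>\<^sup>+\<omega>. indicator A \<omega> * ennreal (exp (s * (\<Sum>l<n. X l \<omega>))) \<partial>M)"
proof -
  define f where "f \<omega> = indicator A \<omega> * ennreal (exp (s * (\<Sum>l<j. X l \<omega>)))" for \<omega>
  define g where "g \<omega> = ennreal (exp (s * (\<Sum>l\<in>{j..<n}. X l \<omega>)))" for \<omega>
  have A: "A \<in> sets M"
    unfolding A_def using ind j unfolding indep_vars_def by (intro sets_first_passage) auto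
  have g_ge_1: "1 \<le> (\<integral>\<^sup>+\<omega>. g \<omega> \<partial>M)"
  proof -
    have "(\<integral>\<^sup>+\<omega>. g \<omega> \<partial>M) = ennreal (exp (s\<^sup>2 * (\<Sum>l\<in>{j..<n}. v l) / 2))"
      unfolding g_def by (rule nn_integral_exp_sum_indep[OF ind _ _ mgf]) auto
    moreover have "(\<Sum>l\<in>{j..<n}. v l) \<ge> 0"
      using v by (auto intro!: sum_nonneg)
    ultimately show ?thesis by simp
  qed
  have indep_fg: "(\<integral>\<^sup>+\<omega>. f \<omega> * g \<omega> \<partial>M) = (\<integral>\<^sup>+\<omega>. f \<omega> \<partial>M) * (\<integral>\<^sup>+\<omega>. g \<omega> \<partial>M)"
  proof -
    define F where "F u = indicator {u. x < (\<Sum>l<j. u l) \<and> (\<forall>i<j. (\<Sum>l<i. u l) \<le> x)} u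
         * ennreal (exp (s * (\<Sum>l<j. u l)))" for u :: "nat \<Rightarrow> real"
    define G where "G u = ennreal (exp (s * (\<Sum>l\<in>{j..<n}. u l)))" for u :: "nat \<Rightarrow> real"
    have "F \<in> borel_measurable (PiM {..<j} (\<lambda>_. borel))" "G \<in> borel_measurable (PiM {j..<n} (\<lambda>_. borel))"
      unfolding F_def G_def by measurable
    moreover have "{..<j} \<inter> {j..<n} = {}" "{..<j} \<subseteq> {..<n}" "{j..<n} \<subseteq> {..<n}"
      using j by auto
    ultimately have "(\<integral>\<^sup>+\<omega>. F (restrict (\<lambda>i. X i \<omega>) {..<j}) * G (restrict (\<lambda>i. X i \<omega>) {j..<n}) \<partial>M)
        = (\<integral>\<^sup>+\<omega>. F (restrict (\<lambda>i. X i \<omega>) {..<j}) \<partial>M) * (\<integral>\<^sup>+\<omega>. G (restrict (\<lambda>i. X i \<omega>) {j..<n}) \<partial>M)"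
      by (intro nn_integral_mult_indep_blocks[OF ind])
    moreover have "f \<omega> = F (restrict (\<lambda>i. X i \<omega>) {..<j})" if "\<omega> \<in> space M" for \<omega>
      using that unfolding f_def F_def A_def by (auto simp: indicator_def)
    moreover have "g \<omega> = G (restrict (\<lambda>i. X i \<omega>) {j..<n})" for \<omega>
      unfolding g_def G_def by auto
    ultimately show ?thesis
      by (simp cong: nn_integral_cong)
  qed
  have "ennreal (exp (s * x)) * emeasure M A = (\<integral>\<^sup>+\<omega>. ennreal (exp (s * x)) * indicator A \<omega> \<partial>M)"
    using A by (simp add: nn_integral_cmult_indicator)
  also have "\<dots> \<le> (\<integral>\<^sup>+\<omega>. f \<omega> \<partial>M)"
    unfolding f_def using s
    by (intro nn_integral_mono) (auto simp: A_def indicator_def mult.commute intro: mult_left_mono)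
  also have "\<dots> \<le> (\<integral>\<^sup>+\<omega>. f \<omega> \<partial>M) * (\<integral>\<^sup>+\<omega>. g \<omega> \<partial>M)"
    using mult_left_mono[OF g_ge_1] by simp
  also have "\<dots> = (\<integral>\<^sup>+\<omega>. f \<omega> * g \<omega> \<partial>M)"
    by (rule indep_fg[symmetric])
  also have "\<dots> = (\<integral>\<^sup>+\<omega>. indicator A \<omega> * ennreal (exp (s * (\<Sum>l<n. X l \<omega>))) \<partial>M)"
  proof (intro nn_integral_cong)
    fix \<omega>
    have "(\<Sum>l<n. X l \<omega>) = (\<Sum>l<j. X l \<omega>) + (\<Sum>l\<in>{j..<n}. X l \<omega>)"
      using j by (metis atLeast0LessThan sum.atLeastLessThan_concat zero_le)
    then show "f \<omega> * g \<omega> = indicator A \<omega> * ennreal (exp (s * (\<Sum>l<n. X l \<omega>)))"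
      unfolding f_def g_def by (simp add: distrib_left exp_add ennreal_mult'' mult.assoc)
  qed
  finally show ?thesis .
qed

lemma (in prob_space) exp_mult_emeasure_exists_partial_sum_gt_le:
  fixes X :: "nat \<Rightarrow> 'a \<Rightarrow> real"
  assumes ind: "indep_vars (\<lambda>_. borel) X {..<n}"
    and mgf: "\<And>l \<mu>. l < n \<Longrightarrow> (\<integral>\<^sup>+\<omega>. ennreal (exp (\<mu> * X l \<omega>)) \<partial>M) = ennreal (exp (\<mu>\<^sup>2 * v l / 2))"
    and v: "\<And>l. l < n \<Longrightarrow> v l \<ge> 0" and s: "s \<ge> 0"
  shows "ennreal (exp (s * x)) * emeasure M {\<omega>\<in>space M. \<exists>i\<le>n. x < (\<Sum>l<i. X l \<omega>)}
      \<le> ennreal (exp (s\<^sup>2 * (\<Sum>l<n. v l) / 2))"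
proof -
  define S where "S i \<omega> = (\<Sum>l<i. X l \<omega>)" for i \<omega>
  define A where "A j = {\<omega>\<in>space M. x < S j \<omega> \<and> (\<forall>i<j. S i \<omega> \<le> x)}" for j
  define Z where "Z \<omega> = ennreal (exp (s * S n \<omega>))" for \<omega>
  have A_bound: "ennreal (exp (s * x)) * emeasure M (A j) \<le> (\<integral>\<^sup>+\<omega>. indicator (A j) \<omega> * Z \<omega> \<partial>M)"
    if "j \<le> n" for j
    unfolding A_def S_def Z_def using that s
    by (intro exp_mult_emeasure_first_passage_le[OF ind mgf v]) auto
  have A: "A j \<in> sets M" if "j \<le> n" for j
    unfolding A_def S_def using ind that unfolding indep_vars_def by (intro sets_first_passage) auto
  have Z: "Z \<in> borel_measurable M"
  proof -
    have "S n \<in> borel_measurable M"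
      using ind unfolding S_def indep_vars_def by (auto intro!: borel_measurable_sum)
    then show ?thesis
      unfolding Z_def by (rule measurable_compose[where g="\<lambda>y. ennreal (exp (s * y))"]) measurable
  qed
  have first_passage: "{\<omega>\<in>space M. \<exists>i\<le>n. x < S i \<omega>} \<subseteq> (\<Union>j\<in>{..n}. A j)"
  proof
    fix \<omega> assume "\<omega> \<in> {\<omega>\<in>space M. \<exists>i\<le>n. x < S i \<omega>}"
    then obtain i where i: "i \<le> n" "x < S i \<omega>" "\<omega> \<in> space M" by auto
    define j where "j = (LEAST i. x < S i \<omega>)"
    have "x < S j \<omega>" "j \<le> i" "\<forall>i'<j. S i' \<omega> \<le> x"
      unfolding j_def using i by (auto intro: LeastI Least_le dest: not_less_Least)
    then show "\<omega> \<in> (\<Union>j\<in>{..n}. A j)" using i unfolding A_def by auto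
  qed
  have disj: "disjoint_family_on A {..n}"
    unfolding disjoint_family_on_def A_def by (auto; metis linorder_neqE_nat not_le)
  have "ennreal (exp (s * x)) * emeasure M {\<omega>\<in>space M. \<exists>i\<le>n. x < S i \<omega>}
      \<le> ennreal (exp (s * x)) * (\<Sum>j\<in>{..n}. emeasure M (A j))"
    using A first_passage
    by (intro mult_left_mono order_trans[OF emeasure_mono emeasure_subadditive_finite]) auto
  also have "\<dots> \<le> (\<Sum>j\<in>{..n}. \<integral>\<^sup>+\<omega>. indicator (A j) \<omega> * Z \<omega> \<partial>M)"
    unfolding sum_distrib_left by (intro sum_mono A_bound) auto
  also have "\<dots> = (\<integral>\<^sup>+\<omega>. (\<Sum>j\<in>{..n}. indicator (A j) \<omega>) * Z \<omega> \<partial>M)"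
    using A Z unfolding sum_distrib_right by (intro nn_integral_sum[symmetric]) auto
  also have "\<dots> = (\<integral>\<^sup>+\<omega>. indicator (\<Union>j\<in>{..n}. A j) \<omega> * Z \<omega> \<partial>M)"
    by (simp add: indicator_UN_disjoint[OF _ disj])
  also have "\<dots> \<le> (\<integral>\<^sup>+\<omega>. Z \<omega> \<partial>M)"
    by (intro nn_integral_mono) (simp add: indicator_def)
  also have "\<dots> = ennreal (exp (s\<^sup>2 * (\<Sum>l<n. v l) / 2))"
    unfolding Z_def S_def by (rule nn_integral_exp_sum_indep[OF ind _ _ mgf]) auto
  finally show ?thesis
    unfolding S_def .
qed

lemma (in prob_space) emeasure_exists_partial_sum_gt_le:
  fixes X :: "nat \<Rightarrow> 'a \<Rightarrow> real"
  assumes ind: "indep_vars (\<lambda>_. borel) X {..<n}"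
    and mgf: "\<And>l \<mu>. l < n \<Longrightarrow> (\<integral>\<^sup>+\<omega>. ennreal (exp (\<mu> * X l \<omega>)) \<partial>M) = ennreal (exp (\<mu>\<^sup>2 * v l / 2))"
    and v: "\<And>l. l < n \<Longrightarrow> v l \<ge> 0" and V: "(\<Sum>l<n. v l) \<le> V"
    and x: "x > 0" and V_pos: "V > 0"
  shows "emeasure M {\<omega>\<in>space M. \<exists>i\<le>n. x < (\<Sum>l<i. X l \<omega>)} \<le> ennreal (exp (- x\<^sup>2 / (2 * V)))"
proof -
  define s where "s = x / V"
  define P where "P = emeasure M {\<omega>\<in>space M. \<exists>i\<le>n. x < (\<Sum>l<i. X l \<omega>)}"
  have "s > 0"
    using x V_pos by (simp add: s_def)
  then have "ennreal (exp (s * x)) * P \<le> ennreal (exp (s\<^sup>2 * (\<Sum>l<n. v l) / 2))"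
    unfolding P_def by (intro exp_mult_emeasure_exists_partial_sum_gt_le[OF ind mgf v] less_imp_le)
  also have "\<dots> \<le> ennreal (exp (s\<^sup>2 * V / 2))"
    using V by (intro ennreal_leI) (auto intro!: mult_left_mono divide_right_mono)
  finally have "ennreal (exp (- (s * x))) * (ennreal (exp (s * x)) * P)
      \<le> ennreal (exp (- (s * x))) * ennreal (exp (s\<^sup>2 * V / 2))"
    by (rule mult_left_mono) simp
  moreover have "ennreal (exp (- (s * x))) * (ennreal (exp (s * x)) * P) = P"
    by (simp add: mult.assoc[symmetric] ennreal_mult''[symmetric] exp_add[symmetric])
  moreover have "ennreal (exp (- (s * x))) * ennreal (exp (s\<^sup>2 * V / 2)) = ennreal (exp (- x\<^sup>2 / (2 * V)))"
    using V_pos by (simp add: ennreal_mult''[symmetric] exp_add[symmetric] s_def field_simps power2_eq_square)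
  ultimately show ?thesis
    unfolding P_def by simp
qed

lemma (in prob_space) emeasure_exists_abs_partial_sum_gt_le:
  fixes X :: "nat \<Rightarrow> 'a \<Rightarrow> real"
  assumes ind: "indep_vars (\<lambda>_. borel) X {..<n}"
    and mgf: "\<And>l \<mu>. l < n \<Longrightarrow> (\<integral>\<^sup>+\<omega>. ennreal (exp (\<mu> * X l \<omega>)) \<partial>M) = ennreal (exp (\<mu>\<^sup>2 * v l / 2))"
    and v: "\<And>l. l < n \<Longrightarrow> v l \<ge> 0" and V: "(\<Sum>l<n. v l) \<le> V"
    and x: "x > 0" and V_pos: "V > 0"
  shows "emeasure M {\<omega>\<in>space M. \<exists>i\<le>n. x < \<bar>\<Sum>l<i. X l \<omega>\<bar>} \<le> ennreal (2 * exp (- x\<^sup>2 / (2 * V)))"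
proof -
  define up where "up Y = {\<omega>\<in>space M. \<exists>i\<le>n. x < (\<Sum>l<i. Y l \<omega>)}" for Y :: "nat \<Rightarrow> 'a \<Rightarrow> real"
  have ind_neg: "indep_vars (\<lambda>_. borel) (\<lambda>l \<omega>. - X l \<omega>) {..<n}"
    by (rule indep_vars_compose2[OF ind, where Y="\<lambda>l y. - y"]) auto
  have "up Y \<in> sets M" if "indep_vars (\<lambda>_. borel) Y {..<n}" for Y
    using that unfolding up_def indep_vars_def by (intro sets_exists_partial_sum_gt) auto
  then have sets: "up X \<in> sets M" "up (\<lambda>l \<omega>. - X l \<omega>) \<in> sets M"
    using ind ind_neg by auto
  have "{\<omega>\<in>space M. \<exists>i\<le>n. x < \<bar>\<Sum>l<i. X l \<omega>\<bar>} \<subseteq> up X \<union> up (\<lambda>l \<omega>. - X l \<omega>)"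
    unfolding up_def abs_real_def sum_negf by (auto split: if_splits)
  then have "emeasure M {\<omega>\<in>space M. \<exists>i\<le>n. x < \<bar>\<Sum>l<i. X l \<omega>\<bar>} \<le> emeasure M (up X) + emeasure M (up (\<lambda>l \<omega>. - X l \<omega>))"
    using sets by (intro order_trans[OF emeasure_mono emeasure_subadditive]) auto
  also have "\<dots> \<le> ennreal (exp (- x\<^sup>2 / (2 * V))) + ennreal (exp (- x\<^sup>2 / (2 * V)))"
    unfolding up_def using mgf[of _ "- _"]
    by (intro add_mono emeasure_exists_partial_sum_gt_le[OF _ _ v V x V_pos] ind ind_neg) (auto simp: mgf)
  also have "\<dots> = ennreal (2 * exp (- x\<^sup>2 / (2 * V)))"
    by (simp flip: ennreal_plus)
  finally show ?thesis .
qed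

section \<open>Weighted Brownian grid sums\<close>

lemma
  assumes "std_brownian_motion M B"
  shows std_brownian_motion_prob_space: "prob_space M"
    and std_brownian_motion_measurable: "t \<ge> 0 \<Longrightarrow> B t \<in> borel_measurable M"
    and std_brownian_motion_zero: "\<omega> \<in> space M \<Longrightarrow> B 0 \<omega> = 0"
    and std_brownian_motion_continuous: "\<omega> \<in> space M \<Longrightarrow> continuous_on {0..} (\<lambda>t. B t \<omega>)"
    and std_brownian_motion_increment:
      "0 \<le> s \<Longrightarrow> s < t \<Longrightarrow>
        distributed M lborel (\<lambda>\<omega>. B t \<omega> - B s \<omega>) (\<lambda>x. ennreal (normal_density 0 (sqrt (t - s)) x))"
    and std_brownian_motion_indep_increments:
      "0 \<le> ts 0 \<Longrightarrow> (\<And>i. i < n \<Longrightarrow> ts i < ts (Suc i)) \<Longrightarrow>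
        prob_space.indep_vars M (\<lambda>_. borel) (\<lambda>i \<omega>. B (ts (Suc i)) \<omega> - B (ts i) \<omega>) {..<n}"
  using assms unfolding std_brownian_motion_def by blast+

lemma sum_exp_grid_le:
  fixes c \<Delta> :: real
  assumes c: "c > 0"
  shows "(\<Sum>l<n. exp (c * (real l * \<Delta>)) * \<Delta>) \<le> (exp (c * (real n * \<Delta>)) - 1) / c"
proof (induction n)
  case (Suc n)
  have "exp (c * (real n * \<Delta>)) * (1 + c * \<Delta>) \<le> exp (c * (real n * \<Delta>)) * exp (c * \<Delta>)"
    by (intro mult_left_mono exp_ge_add_one_self) auto
  also have "\<dots> = exp (c * (real (Suc n) * \<Delta>))"
    by (simp add: exp_add[symmetric] algebra_simps)
  finally have "exp (c * (real n * \<Delta>)) * \<Delta> \<le> (exp (c * (real (Suc n) * \<Delta>)) - exp (c * (real n * \<Delta>))) / c"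
    using c by (simp add: field_simps)
  with Suc show ?case
    by (simp add: diff_divide_distrib)
qed simp

lemma emeasure_brownian_exp_grid_sum_gt_le:
  assumes BM: "std_brownian_motion M B" and \<theta>: "\<theta> > 0" and T: "T > 0" and x: "x > 0"
  shows "emeasure M {\<omega>\<in>space M. \<exists>i\<le>n. x < \<bar>exp_grid_sum \<theta> (\<lambda>s. B s \<omega>) T n i\<bar>}
         \<le> ennreal (2 * exp (- \<theta> * x\<^sup>2 / exp (2 * \<theta> * T)))"
proof -
  interpret prob_space M
    by (rule std_brownian_motion_prob_space[OF BM])
  define r where "r l = real l * T / real n" for l
  define \<Delta> where "\<Delta> = T / real n"
  define X where "X l \<omega> = exp (\<theta> * r l) * (B (r (Suc l)) \<omega> - B (r l) \<omega>)" for l \<omega>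
  define v where "v l = (exp (\<theta> * r l))\<^sup>2 * \<Delta>" for l
  define V where "V = exp (2 * \<theta> * T) / (2 * \<theta>)"
  have \<Delta>: "n > 0 \<Longrightarrow> \<Delta> > 0" and r: "r l \<ge> 0" for l
    using T unfolding r_def \<Delta>_def by auto
  have r_Suc: "r (Suc l) - r l = \<Delta>" for l
    unfolding r_def \<Delta>_def by (simp add: diff_divide_distrib[symmetric] algebra_simps)
  have r_less: "r l < r (Suc l)" if "l < n" for l
    using \<Delta> r_Suc[of l] that by force
  have ind: "indep_vars (\<lambda>_. borel) X {..<n}"
  proof -
    have "indep_vars (\<lambda>_. borel) (\<lambda>l \<omega>. B (r (Suc l)) \<omega> - B (r l) \<omega>) {..<n}"
      using std_brownian_motion_indep_increments[OF BM, of r n] r r_less by auto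
    then show ?thesis
      unfolding X_def by (rule indep_vars_compose2[where Y="\<lambda>l y. exp (\<theta> * r l) * y"]) auto
  qed
  have mgf: "(\<integral>\<^sup>+\<omega>. ennreal (exp (\<mu> * X l \<omega>)) \<partial>M) = ennreal (exp (\<mu>\<^sup>2 * v l / 2))" if "l < n" for l \<mu>
  proof -
    have "distributed M lborel (\<lambda>\<omega>. B (r (Suc l)) \<omega> - B (r l) \<omega>) (\<lambda>x. ennreal (normal_density 0 (sqrt \<Delta>) x))"
      using std_brownian_motion_increment[OF BM r r_less[OF that]] r_Suc[of l] by simp
    from nn_integral_exp_mult_centred_normal[OF this, of "\<mu> * exp (\<theta> * r l)"]
    show ?thesis
      using \<Delta> that unfolding X_def v_def by (simp add: mult.assoc power_mult_distrib)
  qed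
  have "(\<Sum>l<n. v l) = (\<Sum>l<n. exp (2 * \<theta> * (real l * \<Delta>)) * \<Delta>)"
    unfolding v_def r_def \<Delta>_def by (simp add: power2_eq_square exp_add[symmetric] algebra_simps)
  also have "\<dots> \<le> (exp (2 * \<theta> * (real n * \<Delta>)) - 1) / (2 * \<theta>)"
    using \<theta> by (intro sum_exp_grid_le) simp
  also have "\<dots> \<le> V"
    unfolding V_def \<Delta>_def using \<theta> by (cases "n = 0") (simp_all add: divide_right_mono)
  finally have V: "(\<Sum>l<n. v l) \<le> V" .
  have "emeasure M {\<omega>\<in>space M. \<exists>i\<le>n. x < \<bar>\<Sum>l<i. X l \<omega>\<bar>} \<le> ennreal (2 * exp (- x\<^sup>2 / (2 * V)))"
    using \<theta> \<Delta> by (intro emeasure_exists_abs_partial_sum_gt_le[OF ind mgf _ V x]) (auto simp: v_def V_def)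
  also have "- x\<^sup>2 / (2 * V) = - \<theta> * x\<^sup>2 / exp (2 * \<theta> * T)"
    using \<theta> unfolding V_def by (simp add: field_simps)
  finally show ?thesis
    unfolding exp_grid_sum_def X_def r_def .
qed

section \<open>Exit time of the Ornstein--Uhlenbeck process\<close>

lemma emeasure_Union_Inter_shift_le:
  fixes E :: "nat \<Rightarrow> 'a set"
  assumes "\<And>N. E N \<in> sets M" "\<And>N. emeasure M (E N) \<le> c"
  shows "emeasure M (\<Union>m. \<Inter>N. E (N + m)) \<le> c"
proof -
  have "incseq (\<lambda>m. \<Inter>N. E (N + m))"
    by (intro monoI) (auto, metis add.assoc add.commute le_add_diff_inverse)
  then have "emeasure M (\<Union>m. \<Inter>N. E (N + m)) = (SUP m. emeasure M (\<Inter>N. E (N + m)))"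
    using assms(1) by (intro SUP_emeasure_incseq[symmetric]) auto
  also have "\<dots> \<le> (SUP m. emeasure M (E m))"
  proof (rule SUP_mono)
    fix m
    have "(\<Inter>N. E (N + m)) \<subseteq> E m"
      using INT_lower[of 0 UNIV "\<lambda>N. E (N + m)"] by simp
    then show "\<exists>m'\<in>UNIV. emeasure M (\<Inter>N. E (N + m)) \<le> emeasure M (E m')"
      using assms(1) by (intro bexI[of _ m] emeasure_mono) auto
  qed
  also have "\<dots> \<le> c"
    using assms(2) by (rule SUP_least)
  finally show ?thesis .
qed

lemma ou_weighted_path_gt_event:
  assumes BM: "std_brownian_motion M B" and OU: "ou_process M \<theta> B U"
    and \<theta>: "\<theta> > 0" and T: "T > 0" and x: "x > 0"
  obtains G where "G \<in> sets M" "emeasure M G \<le> ennreal (2 * exp (- \<theta> * x\<^sup>2 / exp (2 * \<theta> * T)))"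
    "\<And>\<omega> t. \<omega> \<in> space M \<Longrightarrow> 0 \<le> t \<Longrightarrow> t \<le> T \<Longrightarrow> x < \<bar>exp (\<theta> * t) * U t \<omega>\<bar> \<Longrightarrow> \<omega> \<in> G"
proof -
  define E where "E N = {\<omega>\<in>space M. \<exists>i\<le>2 ^ N. x < \<bar>exp_grid_sum \<theta> (\<lambda>s. B s \<omega>) T (2 ^ N) i\<bar>}" for N
  define G where "G = (\<Union>m. \<Inter>N. E (N + m))"
  have [measurable]: "B (real k * T / real (2 ^ N)) \<in> borel_measurable M" for k N
    using T by (intro std_brownian_motion_measurable[OF BM]) simp
  have E: "E N \<in> sets M" for N
    unfolding E_def exp_grid_sum_def by measurable
  have E_le: "emeasure M (E N) \<le> ennreal (2 * exp (- \<theta> * x\<^sup>2 / exp (2 * \<theta> * T)))" for N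
    unfolding E_def by (rule emeasure_brownian_exp_grid_sum_gt_le[OF BM \<theta> T x])
  have "G \<in> sets M"
    unfolding G_def using E by auto
  moreover have "emeasure M G \<le> ennreal (2 * exp (- \<theta> * x\<^sup>2 / exp (2 * \<theta> * T)))"
    unfolding G_def by (rule emeasure_Union_Inter_shift_le[OF E E_le])
  moreover have "\<omega> \<in> G"
    if \<omega>: "\<omega> \<in> space M" and t: "0 \<le> t" "t \<le> T" and gt: "x < \<bar>exp (\<theta> * t) * U t \<omega>\<bar>" for \<omega> t
  proof -
    have "continuous_on {0..} (\<lambda>t. U t \<omega>)" "\<And>s. s \<ge> 0 \<Longrightarrow> U s \<omega> = - \<theta> * integral {0..s} (\<lambda>t. U t \<omega>) + B s \<omega>"
      using OU \<omega> unfolding ou_process_def by auto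
    from ou_path_eventually_exp_grid_sum_gt[OF this(1) std_brownian_motion_continuous[OF BM \<omega>]
        std_brownian_motion_zero[OF BM \<omega>] this(2) T _ t gt] x
    have "\<forall>\<^sub>F N in sequentially. \<omega> \<in> E N"
      using \<omega> unfolding E_def by simp
    then obtain N where "\<forall>n\<ge>N. \<omega> \<in> E n"
      unfolding eventually_sequentially by blast
    then have "\<omega> \<in> (\<Inter>n. E (n + N))"
      by simp
    then show ?thesis
      unfolding G_def by blast
  qed
  ultimately show thesis
    using that by blast
qed

lemma exp_neg_exit_time_le_1:
  assumes "c \<ge> 0"
  shows "exp_neg c (exit_time a u) \<le> 1"
proof -
  have "0 \<le> exit_time a u"
    unfolding exit_time_def by (rule Inf_greatest) auto
  then show ?thesis
    using assms unfolding exp_neg_def by (auto simp: real_of_ereal_pos)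
qed

lemma exp_neg_exit_time_le_suminf:
  fixes u :: "real \<Rightarrow> real"
  assumes c: "c > 0" and h: "h > 0"
    and window: "\<And>k t. real k * h \<le> t \<Longrightarrow> t \<le> real (Suc k) * h \<Longrightarrow> u t \<notin> {-a<..<a} \<Longrightarrow> P k"
  shows "ennreal (exp_neg c (exit_time a u)) \<le> (\<Sum>k. ennreal (exp (- c * h * real k)) * of_bool (P k))"
proof (cases "exit_time a u")
  case (real h0)
  define S where "S = {ereal t | t. t \<ge> 0 \<and> u t \<notin> {-a<..<a}}"
  have H: "Inf S = ereal h0"
    using real unfolding exit_time_def S_def by simp
  have "0 \<le> Inf S"
    unfolding S_def by (rule Inf_greatest) auto
  then have "h0 \<ge> 0"
    using H by simp
  define k where "k = nat \<lfloor>h0 / h\<rfloor>"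
  have "real k = of_int \<lfloor>h0 / h\<rfloor>"
    using \<open>h0 \<ge> 0\<close> h unfolding k_def by simp
  then have "real k \<le> h0 / h" "h0 / h < real k + 1"
    by linarith+
  then have k: "real k * h \<le> h0" "h0 < real (Suc k) * h"
    using h by (simp_all add: pos_le_divide_eq pos_divide_less_eq algebra_simps)
  then have "Inf S < ereal (real (Suc k) * h)"
    using H by simp
  then obtain s where s: "s \<in> S" "s < ereal (real (Suc k) * h)"
    by (auto simp: Inf_less_iff)
  then obtain t where t: "s = ereal t" "u t \<notin> {-a<..<a}"
    unfolding S_def by auto
  have "h0 \<le> t"
    using Inf_lower[OF s(1)] H t by simp
  then have "P k"
    using window[of k t] k s t by simp
  have "ennreal (exp_neg c (exit_time a u)) = ennreal (exp (- c * h0))"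
    using real unfolding exp_neg_def by simp
  also have "\<dots> \<le> ennreal (exp (- c * h * real k))"
    using k c by (intro ennreal_leI) (simp add: mult.assoc mult.commute[of h])
  also have "\<dots> = ennreal (exp (- c * h * real k)) * of_bool (P k)"
    using \<open>P k\<close> by simp
  also have "\<dots> \<le> (\<Sum>k. ennreal (exp (- c * h * real k)) * of_bool (P k))"
    using ennreal_suminf_lessD[of "\<lambda>k. ennreal (exp (- c * h * real k)) * of_bool (P k)" _ k]
    by (meson leI less_irrefl)
  finally show ?thesis .
next
  case PInf
  then show ?thesis
    unfolding exp_neg_def by simp
next
  case MInf
  moreover have "0 \<le> exit_time a u"
    unfolding exit_time_def by (rule Inf_greatest) auto
  ultimately show ?thesis
    by simp
qed

lemma nn_integral_exp_neg_exit_time_le: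
  fixes U :: "real \<Rightarrow> 'a \<Rightarrow> real"
  assumes c: "c > 0" and h: "h > 0" and p: "p \<ge> 0"
    and G: "\<And>k. G k \<in> sets M" "\<And>k. emeasure M (G k) \<le> ennreal p"
    and window: "\<And>\<omega> k t. \<omega> \<in> space M \<Longrightarrow> real k * h \<le> t \<Longrightarrow> t \<le> real (Suc k) * h \<Longrightarrow>
                   U t \<omega> \<notin> {-a<..<a} \<Longrightarrow> \<omega> \<in> G k"
  shows "(\<integral>\<^sup>+\<omega>. ennreal (exp_neg c (exit_time a (\<lambda>t. U t \<omega>))) \<partial>M) \<le> ennreal (p / (1 - exp (- c * h)))"
proof -
  define r where "r = exp (- c * h)"
  have r: "0 < r" "r < 1"
    using c h unfolding r_def by auto
  have "(\<integral>\<^sup>+\<omega>. ennreal (exp_neg c (exit_time a (\<lambda>t. U t \<omega>))) \<partial>M)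
      \<le> (\<integral>\<^sup>+\<omega>. (\<Sum>k. ennreal (exp (- c * h * real k)) * indicator (G k) \<omega>) \<partial>M)"
  proof (rule nn_integral_mono)
    fix \<omega> assume "\<omega> \<in> space M"
    have "ennreal (exp_neg c (exit_time a (\<lambda>t. U t \<omega>)))
        \<le> (\<Sum>k. ennreal (exp (- c * h * real k)) * of_bool (\<omega> \<in> G k))"
      by (rule exp_neg_exit_time_le_suminf[OF c h]) (rule window[OF \<open>\<omega> \<in> space M\<close>])
    then show "ennreal (exp_neg c (exit_time a (\<lambda>t. U t \<omega>)))
        \<le> (\<Sum>k. ennreal (exp (- c * h * real k)) * indicator (G k) \<omega>)"
      by (simp add: indicator_def)
  qed
  also have "\<dots> = (\<Sum>k. ennreal (exp (- c * h * real k)) * emeasure M (G k))"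
    using G by (simp add: nn_integral_suminf nn_integral_cmult_indicator)
  also have "\<dots> \<le> (\<Sum>k. ennreal (p * r ^ k))"
  proof (intro suminf_le summableI)
    fix k
    have "exp (- c * h * real k) = r ^ k"
      unfolding r_def by (simp add: exp_of_nat_mult[symmetric] algebra_simps)
    then have "ennreal (exp (- c * h * real k)) * emeasure M (G k) \<le> ennreal (r ^ k) * ennreal p"
      unfolding \<open>exp (- c * h * real k) = r ^ k\<close> by (intro mult_left_mono G(2)) simp
    then show "ennreal (exp (- c * h * real k)) * emeasure M (G k) \<le> ennreal (p * r ^ k)"
      using p r by (simp add: ennreal_mult'' mult.commute)
  qed
  also have "\<dots> = ennreal (p / (1 - r))"
    using r p by (intro suminf_ennreal_eq) (auto intro: sums_mult[OF geometric_sums, of r p, simplified])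
  finally show ?thesis
    unfolding r_def .
qed

lemma ou_window_exponent_le:
  fixes \<theta> b :: real
  assumes \<theta>: "\<theta> > 0" and b: "b > 0"
  defines "a \<equiv> b / sqrt (2 * \<theta>)" and "h \<equiv> 1 / (\<theta> * b\<^sup>2)"
  shows "- \<theta> * (a * exp (\<theta> * (real k * h) - 1 / b\<^sup>2))\<^sup>2 / exp (2 * \<theta> * (real (Suc k) * h)) \<le> 2 - b\<^sup>2 / 2"
proof -
  define \<delta> where "\<delta> = 1 / b\<^sup>2"
  have "a\<^sup>2 = b\<^sup>2 / (2 * \<theta>)"
    using b \<theta> unfolding a_def by (auto simp: power_divide)
  moreover have "exp (2 * \<theta> * (real (Suc k) * h)) = exp (2 * (\<theta> * (real k * h) - \<delta>)) * exp (4 * \<delta>)"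
    unfolding exp_add[symmetric] using \<theta> b
    by (intro arg_cong[where f=exp]) (simp add: h_def \<delta>_def field_simps)
  ultimately have "\<theta> * (a * exp (\<theta> * (real k * h) - \<delta>))\<^sup>2 / exp (2 * \<theta> * (real (Suc k) * h))
      = b\<^sup>2 / 2 * exp (- 4 * \<delta>)"
    using \<theta> unfolding power_mult_distrib exp_double[symmetric] by (simp add: exp_minus field_simps)
  moreover have "b\<^sup>2 / 2 * (1 + - 4 * \<delta>) \<le> b\<^sup>2 / 2 * exp (- 4 * \<delta>)"
    by (intro mult_left_mono exp_ge_add_one_self) simp
  moreover have "b\<^sup>2 / 2 * (4 * \<delta>) = 2"
    using b unfolding \<delta>_def by simp
  ultimately show ?thesis
    unfolding \<delta>_def by (simp add: algebra_simps)
qed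

lemma ou_exit_window_event:
  assumes BM: "std_brownian_motion M B" and OU: "ou_process M \<theta> B U" and \<theta>: "\<theta> > 0" and b: "b > 0"
  defines "a \<equiv> b / sqrt (2 * \<theta>)" and "h \<equiv> 1 / (\<theta> * b\<^sup>2)"
  obtains G where "G \<in> sets M" "emeasure M G \<le> ennreal (2 * exp 2 / exp (b\<^sup>2 / 2))"
    "\<And>\<omega> t. \<omega> \<in> space M \<Longrightarrow> real k * h \<le> t \<Longrightarrow> t \<le> real (Suc k) * h \<Longrightarrow> U t \<omega> \<notin> {-a<..<a} \<Longrightarrow> \<omega> \<in> G"
proof -
  define T where "T = real (Suc k) * h"
  \<comment> \<open>Just below \<open>a exp(\<theta>kh)\<close>, so that leaving \<open>(-a, a)\<close> in the window gives a strict
    inequality; the factor \<open>exp(-1/b\<^sup>2)\<close> costs only the constant \<open>exp 2\<close>.\<close>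
  define x where "x = a * exp (\<theta> * (real k * h) - 1 / b\<^sup>2)"
  have a: "a > 0" and h: "h > 0"
    using \<theta> b unfolding a_def h_def by auto
  then have "T > 0" "x > 0"
    unfolding T_def x_def by auto
  then obtain G where G: "G \<in> sets M" "emeasure M G \<le> ennreal (2 * exp (- \<theta> * x\<^sup>2 / exp (2 * \<theta> * T)))"
    "\<And>\<omega> t. \<omega> \<in> space M \<Longrightarrow> 0 \<le> t \<Longrightarrow> t \<le> T \<Longrightarrow> x < \<bar>exp (\<theta> * t) * U t \<omega>\<bar> \<Longrightarrow> \<omega> \<in> G"
    by (rule ou_weighted_path_gt_event[OF BM OU \<theta>]) blast
  have "exp (- \<theta> * x\<^sup>2 / exp (2 * \<theta> * T)) \<le> exp (2 - b\<^sup>2 / 2)"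
    using ou_window_exponent_le[OF \<theta> b, of k] unfolding x_def T_def a_def h_def by (rule exp_mono)
  then have "ennreal (2 * exp (- \<theta> * x\<^sup>2 / exp (2 * \<theta> * T))) \<le> ennreal (2 * exp 2 / exp (b\<^sup>2 / 2))"
    by (intro ennreal_leI) (simp add: exp_diff)
  with G(2) have "emeasure M G \<le> ennreal (2 * exp 2 / exp (b\<^sup>2 / 2))"
    by (rule order_trans)
  moreover have "\<omega> \<in> G"
    if "\<omega> \<in> space M" "real k * h \<le> t" "t \<le> T" "U t \<omega> \<notin> {-a<..<a}" for \<omega> t
  proof -
    have "exp (\<theta> * (real k * h) - 1 / b\<^sup>2) < exp (\<theta> * (real k * h))"
      using b by simp
    then have "x < a * exp (\<theta> * (real k * h))"
      unfolding x_def using a by (rule mult_strict_left_mono)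
    also have "\<dots> \<le> \<bar>U t \<omega>\<bar> * exp (\<theta> * t)"
      using that \<theta> a by (intro mult_mono) auto
    moreover have "0 \<le> t"
      using that(2) h by (meson order_trans mult_nonneg_nonneg of_nat_0_le_iff less_imp_le)
    ultimately show ?thesis
      using G(3)[of \<omega> t] that by (simp add: abs_mult mult.commute)
  qed
  ultimately show thesis
    using that G(1) unfolding T_def by blast
qed

lemma ou_exit_window_events:
  assumes BM: "std_brownian_motion M B" and OU: "ou_process M \<theta> B U" and \<theta>: "\<theta> > 0" and b: "b > 0"
  defines "a \<equiv> b / sqrt (2 * \<theta>)" and "h \<equiv> 1 / (\<theta> * b\<^sup>2)"
  obtains G where "\<And>k. G k \<in> sets M" "\<And>k. emeasure M (G k) \<le> ennreal (2 * exp 2 / exp (b\<^sup>2 / 2))"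
    "\<And>\<omega> k t. \<omega> \<in> space M \<Longrightarrow> real k * h \<le> t \<Longrightarrow> t \<le> real (Suc k) * h \<Longrightarrow>
       U t \<omega> \<notin> {-a<..<a} \<Longrightarrow> \<omega> \<in> G k"
proof -
  have "\<exists>G. G \<in> sets M \<and> emeasure M G \<le> ennreal (2 * exp 2 / exp (b\<^sup>2 / 2)) \<and>
      (\<forall>\<omega> t. \<omega> \<in> space M \<longrightarrow> real k * h \<le> t \<longrightarrow> t \<le> real (Suc k) * h \<longrightarrow> U t \<omega> \<notin> {-a<..<a} \<longrightarrow> \<omega> \<in> G)"
    for k
  proof -
    obtain G where "G \<in> sets M" "emeasure M G \<le> ennreal (2 * exp 2 / exp (b\<^sup>2 / 2))"
      "\<And>\<omega> t. \<omega> \<in> space M \<Longrightarrow> real k * h \<le> t \<Longrightarrow> t \<le> real (Suc k) * h \<Longrightarrow> U t \<omega> \<notin> {-a<..<a} \<Longrightarrow> \<omega> \<in> G"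
      unfolding a_def h_def by (rule ou_exit_window_event[OF BM OU \<theta> b]) blast
    then show ?thesis
      by (intro exI[of _ G]) simp
  qed
  then obtain G where "\<forall>k. G k \<in> sets M \<and> emeasure M (G k) \<le> ennreal (2 * exp 2 / exp (b\<^sup>2 / 2)) \<and>
      (\<forall>\<omega> t. \<omega> \<in> space M \<longrightarrow> real k * h \<le> t \<longrightarrow> t \<le> real (Suc k) * h \<longrightarrow> U t \<omega> \<notin> {-a<..<a} \<longrightarrow> \<omega> \<in> G k)"
    by metis
  then show thesis
    using that by blast
qed

lemma min_one_div_one_minus_exp_le:
  fixes y E K :: real
  assumes y: "0 < y" "y \<le> 1" and E: "E > 0" and K: "K \<ge> 1 / 2"
  shows "min 1 (K / E / (1 - exp (- y))) \<le> 4 * K / (1 + y * E)"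
proof (cases "y * E \<ge> 1")
  case True
  have "exp (- y) \<le> 1 / (1 + y)"
    using exp_ge_add_one_self[of y] y by (simp add: exp_minus field_simps)
  also have "\<dots> \<le> 1 - y / 2"
  proof -
    have "y * y \<le> 1 * y"
      using y by (intro mult_right_mono) auto
    then have "1 \<le> (1 - y / 2) * (1 + y)"
      by (simp add: algebra_simps)
    then show ?thesis
      using y by (simp add: pos_divide_le_eq)
  qed
  finally have "exp (- y) \<le> 1 - y / 2" .
  then have "K / E / (1 - exp (- y)) \<le> K / E / (y / 2)"
    using y E K by (intro divide_left_mono) auto
  also have "\<dots> \<le> 4 * K / (1 + y * E)"
    using True y E K by (simp add: field_simps)
  finally show ?thesis
    by simp
next
  case False
  moreover have "0 < 1 + y * E"
    using y E by (simp add: add_pos_nonneg)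
  ultimately have "1 \<le> 4 * K / (1 + y * E)"
    using K by (simp add: le_divide_eq)
  then show ?thesis
    by simp
qed

lemma ou_exit_time_laplace_le:
  assumes BM: "std_brownian_motion M B" and OU: "ou_process M \<theta> B U"
    and \<theta>: "\<theta> > 0" and \<nu>: "0 < \<nu>" "\<nu> < 1" and b: "b > 1"
  shows "(\<integral>\<^sup>+\<omega>. ennreal (exp_neg (\<theta> * \<nu>) (exit_time (b / sqrt (2 * \<theta>)) (\<lambda>t. U t \<omega>))) \<partial>M)
       \<le> ennreal (8 * exp 2 / (1 + \<nu> / b\<^sup>2 * exp (b\<^sup>2 / 2)))"
proof -
  interpret prob_space M
    by (rule std_brownian_motion_prob_space[OF BM])
  define p where "p = 2 * exp 2 / exp (b\<^sup>2 / 2)"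
  define h where "h = 1 / (\<theta> * b\<^sup>2)"
  have "\<theta> * \<nu> * h = \<nu> / b\<^sup>2" and "h > 0"
    using \<theta> b unfolding h_def by auto
  obtain G where "\<And>k. G k \<in> sets M" "\<And>k. emeasure M (G k) \<le> ennreal p"
    "\<And>\<omega> k t. \<omega> \<in> space M \<Longrightarrow> real k * h \<le> t \<Longrightarrow> t \<le> real (Suc k) * h \<Longrightarrow>
       U t \<omega> \<notin> {-(b / sqrt (2 * \<theta>))<..<b / sqrt (2 * \<theta>)} \<Longrightarrow> \<omega> \<in> G k"
    using ou_exit_window_events[OF BM OU \<theta>, of b] b unfolding p_def h_def by auto
  then have "(\<integral>\<^sup>+\<omega>. ennreal (exp_neg (\<theta> * \<nu>) (exit_time (b / sqrt (2 * \<theta>)) (\<lambda>t. U t \<omega>))) \<partial>M)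
      \<le> ennreal (p / (1 - exp (- (\<nu> / b\<^sup>2))))"
    using nn_integral_exp_neg_exit_time_le[of "\<theta> * \<nu>" h p G] \<theta> \<nu> \<open>h > 0\<close> \<open>\<theta> * \<nu> * h = \<nu> / b\<^sup>2\<close>
    unfolding p_def by auto
  moreover have "(\<integral>\<^sup>+\<omega>. ennreal (exp_neg (\<theta> * \<nu>) (exit_time (b / sqrt (2 * \<theta>)) (\<lambda>t. U t \<omega>))) \<partial>M) \<le> 1"
    using \<theta> \<nu> nn_integral_mono[of M _ "\<lambda>_. 1"] exp_neg_exit_time_le_1 by (simp add: emeasure_space_1)
  ultimately have "(\<integral>\<^sup>+\<omega>. ennreal (exp_neg (\<theta> * \<nu>) (exit_time (b / sqrt (2 * \<theta>)) (\<lambda>t. U t \<omega>))) \<partial>M)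
      \<le> ennreal (min 1 (p / (1 - exp (- (\<nu> / b\<^sup>2)))))"
    by (simp add: min_def)
  also have "\<dots> \<le> ennreal (4 * (2 * exp 2) / (1 + \<nu> / b\<^sup>2 * exp (b\<^sup>2 / 2)))"
  proof (intro ennreal_leI)
    have "\<nu> / b\<^sup>2 \<le> 1"
      using \<nu> b by (simp add: divide_le_eq_1 one_less_power less_imp_le[THEN order_trans])
    moreover have "(1 :: real) \<le> 4 * exp 2"
      using one_le_exp_iff[of 2] by linarith
    ultimately show "min 1 (p / (1 - exp (- (\<nu> / b\<^sup>2)))) \<le> 4 * (2 * exp 2) / (1 + \<nu> / b\<^sup>2 * exp (b\<^sup>2 / 2))"
      unfolding p_def using \<nu> b by (intro min_one_div_one_minus_exp_le) auto
  qed
  finally show ?thesis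
    by simp
qed

theorem proposition3p9:
  "\<exists>C>0. \<exists>b0>0. \<forall>(M :: 'a measure) B U \<theta> \<nu> b.
     std_brownian_motion M B \<and> ou_process M \<theta> B U \<and>
     \<theta> > 0 \<and> 0 < \<nu> \<and> \<nu> < 1 \<and> b > b0 \<longrightarrow>
     (\<integral>\<^sup>+ \<omega>. ennreal (exp_neg (\<theta> * \<nu>) (exit_time (b / sqrt (2 * \<theta>)) (\<lambda>t. U t \<omega>))) \<partial>M)
       \<le> ennreal (C / (1 + \<nu> / b\<^sup>2 * exp (b\<^sup>2 / 2)))"
  by (rule exI[of _ "8 * exp 2"], rule conjI, simp, rule exI[of _ "1 :: real"])
    (blast intro: zero_less_one ou_exit_time_laplace_le)

end
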